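(* Let $f : M^* \to \mathbb{R}^3$ be a trivalent polyhedral surface with nonvanishing edge lengths, with the three face normals at every vertex linearly independent and adjacent faces satisfying $n_l \neq \pm n_r$. Then $f$ is a discrete minimal surface (i.e. $H_\phi = 0$ for every face $\phi \in F^*$) if and only if $f$ is a critical point of the area functional with respect to all face offsets of finite support, in the following sense: for every smooth family of height functions $h^t$ with $h^0 = h$ such that $\dot h = \frac{d}{dt}h^t|_{t=0}$ has finite support, with face normals $n$ kept fixed and $f^t$ the corresponding polyhedral surfaces, one has \[ \sum_{\phi \in F^*} \frac{d}{dt}\mathrm{Area}(f^t(\phi))\Big|_{t=0} = 0 \] (a sum with only finitely many nonzero terms).
   Context: Let $M=(V,E,F)$ be a cellular decomposition of an oriented surface without boundary (each face having finitely many edges, each vertex of finite degree), and $M^*=(V^*,E^*,F^* )$ its dual decomposition; faces of $M^*$ correspond bijectively to vertices of $M$. A polyhedral surface is a map $f : V^* \to \mathbb{R}^3$ such that the vertices of each face $\phi \in F^*$ are coplanar (faces may self-intersect). It is trivalent if every vertex of $M^*$ has degree 3. For each face $\phi$, $n_\phi \in \mathbb{S}^2$ is its unit normal (compatible with the orientation) and $h_\phi = \langle f_i, n_\phi\rangle$ for any vertex $i$ of $\phi$ is its height; the vertices of a trivalent surface are determined by $(n,h)$, vertex $i$ being the unique point with $\langle f_i,n_\phi\rangle = h_\phi$ for the three faces $\phi$ containing it. For an oriented edge from $i$ to $j$, the left face $l$ is the face whose positively oriented boundary traverses $i \to j$, and the right face $r$ is the other face containing the edge. The edge length is $\ell_{ij}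 = \|f_j - f_i\|$ and the dihedral angle $\alpha_{ij} \in (-\pi,\pi)$ is defined by $\cos\alpha_{ij} = \langle n_l, n_r\rangle$ and $\sin\alpha_{ij} = \langle n_l \times n_r, (f_j - f_i)/\|f_j-f_i\|\rangle$. The integrated mean curvature of a face is $H_\phi = \frac12\sum_{ij\in\partial\phi}\ell_{ij}\tan\frac{\alpha_{ij}}{2}$. The signed area of a face $\phi$ with boundary vertices $i_1,\dots,i_m$ in positive cyclic order is $\mathrm{Area}(f(\phi)) = \frac12\sum_{s=1}^m \langle f_{i_s}\times f_{i_{s+1}}, n_\phi\rangle$ (indices mod $m$). *)

theory Defs
  imports "HOL-Analysis.Analysis"
begin

text \<open>Combinatorial model of the dual decomposition M* of an oriented surface as a
combinatorial map on a set D of darts (oriented edges):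
  e d   = the reversed dart,
  nx d  = the next dart along the positively oriented boundary of the left face of d,
  tv d  = the tail (initial) vertex of d,
  fc d  = the left face of d (the face whose positively oriented boundary traverses d).
The right face of d is fc (e d); the head of d is tv (e d).
The vertex rotation (outgoing darts around a vertex) is nx o e.\<close>

definition comb_map ::
  "'d set \<Rightarrow> ('d \<Rightarrow> 'd) \<Rightarrow> ('d \<Rightarrow> 'd) \<Rightarrow> ('d \<Rightarrow> 'v) \<Rightarrow> ('d \<Rightarrow> 'f) \<Rightarrow> bool" where
  "comb_map D e nx tv fc \<longleftrightarrow>
     countable D \<and>
     (\<forall>d\<in>D. e d \<in> D \<and> e (e d) = d \<and> e d \<noteq> d) \<and>
     bij_betw nx D D \<and>
     (\<forall>d\<in>D. tv (nx d) = tv (e d)) \<and>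
     (\<forall>d\<in>D. \<exists>k>0. (nx ^^ k) d = d) \<and>
     (\<forall>d\<in>D. \<exists>k>0. ((nx \<circ> e) ^^ k) d = d) \<and>
     (\<forall>d\<in>D. \<forall>d'\<in>D. fc d = fc d' \<longleftrightarrow> (\<exists>k. (nx ^^ k) d = d')) \<and>
     (\<forall>d\<in>D. \<forall>d'\<in>D. tv d = tv d' \<longleftrightarrow> (\<exists>k. ((nx \<circ> e) ^^ k) d = d'))"

definition trivalent :: "'d set \<Rightarrow> ('d \<Rightarrow> 'd) \<Rightarrow> ('d \<Rightarrow> 'd) \<Rightarrow> bool" where
  "trivalent D e nx \<longleftrightarrow>
     (\<forall>d\<in>D. ((nx \<circ> e) ^^ 3) d = d \<and> (nx \<circ> e) d \<noteq> d)"

definition lin_indep3 :: "real^3 \<Rightarrow> real^3 \<Rightarrow> real^3 \<Rightarrow> bool" where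
  "lin_indep3 u v w \<longleftrightarrow>
     (\<forall>a b c. a *\<^sub>R u + b *\<^sub>R v + c *\<^sub>R w = 0 \<longrightarrow> a = 0 \<and> b = 0 \<and> c = 0)"

definition edge_len :: "('d \<Rightarrow> 'd) \<Rightarrow> ('d \<Rightarrow> 'v) \<Rightarrow> ('v \<Rightarrow> real^3) \<Rightarrow> 'd \<Rightarrow> real" where
  "edge_len e tv p d = norm (p (tv (e d)) - p (tv d))"

definition dihedral ::
  "('d \<Rightarrow> 'd) \<Rightarrow> ('d \<Rightarrow> 'v) \<Rightarrow> ('d \<Rightarrow> 'f) \<Rightarrow> ('f \<Rightarrow> real^3) \<Rightarrow> ('v \<Rightarrow> real^3) \<Rightarrow> 'd \<Rightarrow> real" where
  "dihedral e tv fc n p d =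
     (THE a. - pi < a \<and> a < pi \<and>
        cos a = n (fc d) \<bullet> n (fc (e d)) \<and>
        sin a = cross3 (n (fc d)) (n (fc (e d))) \<bullet>
                  ((p (tv (e d)) - p (tv d)) /\<^sub>R norm (p (tv (e d)) - p (tv d))))"

definition mean_curv ::
  "'d set \<Rightarrow> ('d \<Rightarrow> 'd) \<Rightarrow> ('d \<Rightarrow> 'v) \<Rightarrow> ('d \<Rightarrow> 'f) \<Rightarrow> ('f \<Rightarrow> real^3) \<Rightarrow> ('v \<Rightarrow> real^3) \<Rightarrow> 'f \<Rightarrow> real" where
  "mean_curv D e tv fc n p \<phi> =
     1/2 * (\<Sum>d\<in>{d\<in>D. fc d = \<phi>}. edge_len e tv p d * tan (dihedral e tv fc n p d / 2))"

definition face_area ::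
  "'d set \<Rightarrow> ('d \<Rightarrow> 'd) \<Rightarrow> ('d \<Rightarrow> 'v) \<Rightarrow> ('d \<Rightarrow> 'f) \<Rightarrow> ('f \<Rightarrow> real^3) \<Rightarrow> ('v \<Rightarrow> real^3) \<Rightarrow> 'f \<Rightarrow> real" where
  "face_area D e tv fc n p \<phi> =
     1/2 * (\<Sum>d\<in>{d\<in>D. fc d = \<phi>}. cross3 (p (tv d)) (p (tv (e d))) \<bullet> n \<phi>)"

definition vert_of ::
  "'d set \<Rightarrow> ('d \<Rightarrow> 'v) \<Rightarrow> ('d \<Rightarrow> 'f) \<Rightarrow> ('f \<Rightarrow> real^3) \<Rightarrow> ('f \<Rightarrow> real) \<Rightarrow> 'v \<Rightarrow> real^3" where
  "vert_of D tv fc n h i = (THE x. \<forall>d\<in>D. tv d = i \<longrightarrow> x \<bullet> n (fc d) = h (fc d))"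

definition smooth_fun :: "(real \<Rightarrow> real) \<Rightarrow> bool" where
  "smooth_fun g \<longleftrightarrow>
     (\<exists>Dg :: nat \<Rightarrow> real \<Rightarrow> real. Dg 0 = g \<and>
        (\<forall>k t. (Dg k has_real_derivative Dg (Suc k) t) (at t)))"

end

theory Submission imports Defs begin

unbundle cross3_syntax

text \<open>With the normals fixed, every vertex is the solution of three linear equations
\<open>\<langle>x, n\<^sub>\<phi>\<rangle> = h\<^sub>\<phi>\<close>, so by Cramer's rule a variation \<open>h'\<close> of the heights moves each vertex
linearly. Differentiating the signed area of a face and telescoping around its boundary,
an edge \<open>ij\<close> of the face contributes \<open>\<lambda>\<^sub>i\<^sub>j (h'\<^sub>r - cos \<alpha>\<^sub>i\<^sub>j h'\<^sub>l)\<close>, where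
\<open>f\<^sub>j - f\<^sub>i = \<lambda>\<^sub>i\<^sub>j n\<^sub>l \<times> n\<^sub>r\<close>. Summing over all faces pairs each edge with its reverse,
and since \<open>\<lambda>\<^sub>i\<^sub>j (1 - cos \<alpha>\<^sub>i\<^sub>j) = \<ell>\<^sub>i\<^sub>j tan (\<alpha>\<^sub>i\<^sub>j/2)\<close> this yields the first variation formula
\<open>\<Sum>\<^sub>\<phi> A'\<^sub>\<phi> = 2 \<Sum>\<^sub>\<phi> h'\<^sub>\<phi> H\<^sub>\<phi>\<close>. Minimal surfaces are therefore critical, and conversely
varying the height of a single face shows \<open>H\<^sub>\<phi> = 0\<close>.\<close>

lemma triple_product_expand_dual:
  fixes N1 N2 N3 x :: "real^3"
  shows "(N1 \<bullet> N2 \<times> N3) *\<^sub>R x = (x \<bullet> N1) *\<^sub>R (N2 \<times> N3) + (x \<bullet> N2) *\<^sub>R (N3 \<times> N1) + (x \<bullet> N3) *\<^sub>R (N1 \<times> N2)"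
  by (simp add: cross3_simps forall_3)

lemma triple_product_expand:
  fixes N1 N2 N3 y :: "real^3"
  shows "(N1 \<bullet> N2 \<times> N3) *\<^sub>R y = (y \<bullet> N2 \<times> N3) *\<^sub>R N1 + (y \<bullet> N3 \<times> N1) *\<^sub>R N2 + (y \<bullet> N1 \<times> N2) *\<^sub>R N3"
  by (simp add: cross3_simps forall_3)

lemma triple_product_cyclic:
  fixes N1 N2 N3 :: "real^3"
  shows "N2 \<bullet> N3 \<times> N1 = N1 \<bullet> N2 \<times> N3" "N3 \<bullet> N1 \<times> N2 = N1 \<bullet> N2 \<times> N3"
  by (simp_all add: cross3_simps)

lemma cross_cross_eq:
  fixes x p q :: "real^3"
  shows "x \<times> (p \<times> q) = (x \<bullet> q) *\<^sub>R p - (x \<bullet> p) *\<^sub>R q"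
  by (simp add: cross3_simps forall_3)

lemma cross_add_inner_telescoping:
  fixes a b A B m :: "real^3"
  shows "(a \<times> B + A \<times> b) \<bullet> m = (A + B) \<bullet> (b - a) \<times> m - (B \<bullet> b \<times> m - A \<bullet> a \<times> m)"
  by (simp add: cross3_simps forall_3)

lemma lin_indep3_triple_product_nonzero:
  fixes N1 N2 N3 :: "real^3"
  assumes li: "lin_indep3 N1 N2 N3"
  shows "N1 \<bullet> N2 \<times> N3 \<noteq> 0"
proof
  assume "N1 \<bullet> N2 \<times> N3 = 0"
  then have "(N2 \<times> N3 \<bullet> N2 \<times> N3) *\<^sub>R N1 + (N2 \<times> N3 \<bullet> N3 \<times> N1) *\<^sub>R N2
      + (N2 \<times> N3 \<bullet> N1 \<times> N2) *\<^sub>R N3 = 0"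
    using triple_product_expand[of N1 N2 N3 "N2 \<times> N3"] by simp
  with li have "N2 \<times> N3 \<bullet> N2 \<times> N3 = 0" unfolding lin_indep3_def by blast
  then have "N2 \<times> N3 = 0" by simp
  then have "0 *\<^sub>R N1 + (- (N2 \<bullet> N3)) *\<^sub>R N2 + (N2 \<bullet> N2) *\<^sub>R N3 = 0"
    using cross_cross_eq[of N2 N3 N2] cross_skew[of N3 N2] by simp
  with li have "N2 \<bullet> N2 = 0" unfolding lin_indep3_def by blast
  then have "N2 = 0" by simp
  then show False
    using li[unfolded lin_indep3_def, rule_format, of 0 1 0] by simp
qed

definition cramer3 :: "real^3 \<Rightarrow> real^3 \<Rightarrow> real^3 \<Rightarrow> real \<Rightarrow> real \<Rightarrow> real \<Rightarrow> real^3" where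
  "cramer3 N1 N2 N3 a b c = (a / (N1 \<bullet> N2 \<times> N3)) *\<^sub>R (N2 \<times> N3)
     + (b / (N1 \<bullet> N2 \<times> N3)) *\<^sub>R (N3 \<times> N1) + (c / (N1 \<bullet> N2 \<times> N3)) *\<^sub>R (N1 \<times> N2)"

lemma cramer3_inner:
  fixes N1 N2 N3 :: "real^3"
  assumes "N1 \<bullet> N2 \<times> N3 \<noteq> 0"
  shows "cramer3 N1 N2 N3 a b c \<bullet> N1 = a" "cramer3 N1 N2 N3 a b c \<bullet> N2 = b"
    "cramer3 N1 N2 N3 a b c \<bullet> N3 = c"
  using assms
  by (simp_all add: cramer3_def inner_add_left inner_commute[of "_ \<times> _"] triple_product_cyclic
      dot_cross_self)

lemma cramer3_unique:
  fixes N1 N2 N3 x :: "real^3"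
  assumes det: "N1 \<bullet> N2 \<times> N3 \<noteq> 0" and "x \<bullet> N1 = a" "x \<bullet> N2 = b" "x \<bullet> N3 = c"
  shows "x = cramer3 N1 N2 N3 a b c"
proof -
  have "(N1 \<bullet> N2 \<times> N3) *\<^sub>R x = (N1 \<bullet> N2 \<times> N3) *\<^sub>R cramer3 N1 N2 N3 a b c"
    using triple_product_expand_dual[of N1 N2 N3 x] assms by (simp add: cramer3_def scaleR_add_right)
  then show ?thesis using det by simp
qed

lemma cramer3_has_vector_derivative:
  assumes "(a has_real_derivative a') (at x within S)" "(b has_real_derivative b') (at x within S)"
    "(c has_real_derivative c') (at x within S)"
  shows "((\<lambda>t. cramer3 N1 N2 N3 (a t) (b t) (c t)) has_vector_derivative cramer3 N1 N2 N3 a' b' c')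
    (at x within S)"
proof -
  have "((\<lambda>t. (g t / k) *\<^sub>R v) has_vector_derivative (g' / k) *\<^sub>R v) (at x within S)"
    if "(g has_real_derivative g') (at x within S)" for g g' k and v :: "real^3"
    using DERIV_cdivide[OF that, unfolded has_real_derivative_iff_has_vector_derivative]
    by (rule bounded_linear.has_vector_derivative[OF bounded_linear_scaleR_left])
  then show ?thesis
    unfolding cramer3_def using assms by (intro has_vector_derivative_add)
qed

lemma cos_sin_unique_angle:
  fixes c s :: real
  assumes "c\<^sup>2 + s\<^sup>2 = 1" "s \<noteq> 0"
  shows "\<exists>!a. - pi < a \<and> a < pi \<and> cos a = c \<and> sin a = s"
proof (rule ex_ex1I)
  obtain t where t: "0 \<le> t" "t \<le> pi" "c = cos t" "\<bar>s\<bar> = sin t"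
    using sincos_total_pi[of "\<bar>s\<bar>" c] assms by (auto simp: power2_abs)
  have "t \<noteq> pi" using t assms by auto
  then show "\<exists>a. - pi < a \<and> a < pi \<and> cos a = c \<and> sin a = s"
  proof (cases "s > 0")
    case True
    then show ?thesis using t \<open>t \<noteq> pi\<close> by (intro exI[of _ t]) auto
  next
    case False
    then show ?thesis using t \<open>t \<noteq> pi\<close> by (intro exI[of _ "-t"]) auto
  qed
next
  fix a b
  assume a: "- pi < a \<and> a < pi \<and> cos a = c \<and> sin a = s"
    and b: "- pi < b \<and> b < pi \<and> cos b = c \<and> sin b = s"
  then obtain m :: int where m: "a = b + 2 * pi * m" using sin_cos_eq_iff[of a b] by auto
  have "\<bar>2 * pi * m\<bar> < 2 * pi" using a b m by auto
  then have "m = 0" by (simp add: abs_mult)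
  then show "a = b" using m by simp
qed

lemma smooth_fun_has_real_derivative: "smooth_fun g \<Longrightarrow> (g has_real_derivative deriv g x) (at x)"
  unfolding smooth_fun_def by (metis DERIV_imp_deriv)

lemma smooth_fun_affine: "smooth_fun (\<lambda>t. a + b * t)"
  unfolding smooth_fun_def
proof (intro exI[of _ "\<lambda>k t. if k = 0 then a + b * t else if k = 1 then b else 0"] conjI allI)
  show "((\<lambda>t. if k = 0 then a + b * t else if k = 1 then b else 0) has_real_derivative
      (if Suc k = 0 then a + b * t else if Suc k = 1 then b else 0)) (at t)" for k t
    by (cases "k = 0") (auto intro!: derivative_eq_intros)
qed simp

lemma sum_fibre_sums:
  assumes "finite S" "finite P" "S \<subseteq> D" "\<forall>\<phi>\<in>P. finite {d\<in>D. fc d = \<phi>}"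
    and "\<forall>d\<in>D. G d \<noteq> 0 \<longrightarrow> d \<in> S \<and> fc d \<in> P"
  shows "(\<Sum>\<phi>\<in>P. \<Sum>d\<in>{d\<in>D. fc d = \<phi>}. G d) = sum G S"
proof -
  let ?T = "{d\<in>S. fc d \<in> P}"
  have "(\<Sum>d\<in>{d\<in>D. fc d = \<phi>}. G d) = (\<Sum>d\<in>{d\<in>?T. fc d = \<phi>}. G d)" if "\<phi> \<in> P" for \<phi>
    by (rule sum.mono_neutral_right) (use assms that in auto)
  then have "(\<Sum>\<phi>\<in>P. \<Sum>d\<in>{d\<in>D. fc d = \<phi>}. G d) = (\<Sum>\<phi>\<in>P. \<Sum>d\<in>{d\<in>?T. fc d = \<phi>}. G d)"
    by simp
  also have "\<dots> = sum G ?T"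
    by (rule sum.group) (use assms in auto)
  also have "\<dots> = sum G S"
    by (rule sum.mono_neutral_left) (use assms in auto)
  finally show ?thesis .
qed

lemma nonzero_fibre_sums:
  assumes "finite S" "S \<subseteq> D" "\<forall>\<phi>. finite {d\<in>D. fc d = \<phi>}" "\<forall>d\<in>D - S. G d = 0"
  defines "A \<phi> \<equiv> \<Sum>d\<in>{d\<in>D. fc d = \<phi>}. G d"
  shows "finite {\<phi>\<in>fc ` D. A \<phi> \<noteq> 0} \<and> (\<Sum>\<phi>\<in>{\<phi>\<in>fc ` D. A \<phi> \<noteq> 0}. A \<phi>) = sum G S"
proof
  have sub: "{\<phi>\<in>fc ` D. A \<phi> \<noteq> 0} \<subseteq> fc ` S"
  proof
    fix \<phi> assume "\<phi> \<in> {\<phi>\<in>fc ` D. A \<phi> \<noteq> 0}"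
    then obtain d where "d \<in> D" "fc d = \<phi>" "G d \<noteq> 0"
      unfolding A_def using sum.not_neutral_contains_not_neutral by blast
    then show "\<phi> \<in> fc ` S" using assms(4) by blast
  qed
  then show "finite {\<phi>\<in>fc ` D. A \<phi> \<noteq> 0}" using assms(1) finite_subset by blast
  have "(\<Sum>\<phi>\<in>{\<phi>\<in>fc ` D. A \<phi> \<noteq> 0}. A \<phi>) = (\<Sum>\<phi>\<in>fc ` S. A \<phi>)"
    using sub assms(1,2) by (intro sum.mono_neutral_left) auto
  also have "\<dots> = sum G S"
    unfolding A_def by (rule sum_fibre_sums) (use assms in auto)
  finally show "(\<Sum>\<phi>\<in>{\<phi>\<in>fc ` D. A \<phi> \<noteq> 0}. A \<phi>) = sum G S" .
qed

locale trivalent_map =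
  fixes D :: "'d set" and e nx :: "'d \<Rightarrow> 'd" and tv :: "'d \<Rightarrow> 'v" and fc :: "'d \<Rightarrow> 'f"
  assumes map: "comb_map D e nx tv fc"
    and triv: "trivalent D e nx"
begin

abbreviation face_darts :: "'f \<Rightarrow> 'd set" where
  "face_darts \<phi> \<equiv> {d\<in>D. fc d = \<phi>}"

abbreviation rot :: "'d \<Rightarrow> 'd" where
  "rot d \<equiv> nx (e d)"

lemma e_in: "d \<in> D \<Longrightarrow> e d \<in> D"
  and e_e: "d \<in> D \<Longrightarrow> e (e d) = d"
  and nx_in: "d \<in> D \<Longrightarrow> nx d \<in> D"
  and inj_on_nx: "inj_on nx D"
  and tv_nx: "d \<in> D \<Longrightarrow> tv (nx d) = tv (e d)"
  using map unfolding comb_map_def bij_betw_def by auto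

lemma same_face_iff: "d \<in> D \<Longrightarrow> d' \<in> D \<Longrightarrow> fc d = fc d' \<longleftrightarrow> (\<exists>k. (nx ^^ k) d = d')"
  using map unfolding comb_map_def by blast

lemma same_vertex_iff: "d \<in> D \<Longrightarrow> d' \<in> D \<Longrightarrow> tv d = tv d' \<longleftrightarrow> (\<exists>k. ((nx \<circ> e) ^^ k) d = d')"
  using map unfolding comb_map_def by blast

lemma fc_nx: "d \<in> D \<Longrightarrow> fc (nx d) = fc d"
  using same_face_iff[of d "nx d"] nx_in by (metis funpow_0 funpow_Suc_right o_apply)

lemma rot_in: "d \<in> D \<Longrightarrow> rot d \<in> D"
  and tv_rot: "d \<in> D \<Longrightarrow> tv (rot d) = tv d"
  and fc_rot: "d \<in> D \<Longrightarrow> fc (rot d) = fc (e d)"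
  using nx_in tv_nx fc_nx e_in e_e by auto

lemma finite_face_darts: "finite (face_darts \<phi>)"
proof (cases "\<phi> \<in> fc ` D")
  case True
  then obtain d0 where d0: "d0 \<in> D" "fc d0 = \<phi>" by auto
  obtain p where p: "p > 0" "(nx ^^ p) d0 = d0" using map d0 unfolding comb_map_def by blast
  have "face_darts \<phi> \<subseteq> (\<lambda>k. (nx ^^ k) d0) ` {..<p}"
  proof
    fix d assume "d \<in> face_darts \<phi>"
    then obtain k where "(nx ^^ k) d0 = d" using same_face_iff[of d0 d] d0 by auto
    then have "(nx ^^ (k mod p)) d0 = d" using funpow_mod_eq[OF p(2)] by simp
    then show "d \<in> (\<lambda>k. (nx ^^ k) d0) ` {..<p}" using p(1) by auto
  qed
  then show ?thesis by (rule finite_subset) simp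
next
  case False
  then have "face_darts \<phi> = {}" by blast
  then show ?thesis by (simp only: finite.emptyI)
qed

lemma nx_image_face_darts: "nx ` face_darts \<phi> = face_darts \<phi>"
  by (rule endo_inj_surj[OF finite_face_darts])
    (auto simp: nx_in fc_nx intro: inj_on_subset[OF inj_on_nx])

lemma sum_face_darts_head_eq_tail:
  "(\<Sum>d\<in>face_darts \<phi>. K (tv (e d))) = (\<Sum>d\<in>face_darts \<phi>. K (tv d))"
proof -
  have "(\<Sum>d\<in>face_darts \<phi>. K (tv (e d))) = (\<Sum>d\<in>face_darts \<phi>. K (tv (nx d)))"
    by (rule sum.cong) (auto simp: tv_nx)
  also have "\<dots> = (\<Sum>d\<in>nx ` face_darts \<phi>. K (tv d))"
    by (subst sum.reindex) (auto intro: inj_on_subset[OF inj_on_nx])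
  finally show ?thesis by (simp only: nx_image_face_darts)
qed

lemma darts_at_vertex:
  assumes "d \<in> D" "d' \<in> D" "tv d' = tv d"
  shows "d' = d \<or> d' = rot d \<or> d' = rot (rot d)"
proof -
  obtain k where k: "((nx \<circ> e) ^^ k) d = d'" using same_vertex_iff assms by metis
  have "((nx \<circ> e) ^^ 3) d = d" using triv assms unfolding trivalent_def by blast
  then have "((nx \<circ> e) ^^ (k mod 3)) d = d'" using k funpow_mod_eq by metis
  moreover have "k mod 3 = 0 \<or> k mod 3 = 1 \<or> k mod 3 = 2" by presburger
  ultimately show ?thesis by (auto simp: numeral_2_eq_2)
qed

end

locale independent_normals = trivalent_map D e nx tv fc
  for D :: "'d set" and e nx :: "'d \<Rightarrow> 'd" and tv :: "'d \<Rightarrow> 'v" and fc :: "'d \<Rightarrow> 'f" +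
  fixes n :: "'f \<Rightarrow> real^3"
  assumes indep: "\<forall>d\<in>D. lin_indep3 (n (fc d)) (n (fc ((nx \<circ> e) d))) (n (fc (((nx \<circ> e) ^^ 2) d)))"
begin

lemma triple_product_at_vertex: "d \<in> D \<Longrightarrow> n (fc d) \<bullet> n (fc (rot d)) \<times> n (fc (rot (rot d))) \<noteq> 0"
  using indep lin_indep3_triple_product_nonzero by (simp add: numeral_2_eq_2)

lemma vertex_planes_iff:
  assumes d: "d \<in> D"
  shows "(\<forall>d'\<in>D. tv d' = tv d \<longrightarrow> x \<bullet> n (fc d') = g (fc d')) \<longleftrightarrow>
    x = cramer3 (n (fc d)) (n (fc (rot d))) (n (fc (rot (rot d))))
      (g (fc d)) (g (fc (rot d))) (g (fc (rot (rot d))))"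
proof
  assume "\<forall>d'\<in>D. tv d' = tv d \<longrightarrow> x \<bullet> n (fc d') = g (fc d')"
  then show "x = cramer3 (n (fc d)) (n (fc (rot d))) (n (fc (rot (rot d))))
      (g (fc d)) (g (fc (rot d))) (g (fc (rot (rot d))))"
    using d rot_in tv_rot by (intro cramer3_unique triple_product_at_vertex) auto
next
  assume x: "x = cramer3 (n (fc d)) (n (fc (rot d))) (n (fc (rot (rot d))))
      (g (fc d)) (g (fc (rot d))) (g (fc (rot (rot d))))"
  show "\<forall>d'\<in>D. tv d' = tv d \<longrightarrow> x \<bullet> n (fc d') = g (fc d')"
  proof (intro ballI impI)
    fix d' assume "d' \<in> D" "tv d' = tv d"
    then consider "d' = d" | "d' = rot d" | "d' = rot (rot d)" using darts_at_vertex d by blast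
    then show "x \<bullet> n (fc d') = g (fc d')"
      using cramer3_inner[OF triple_product_at_vertex[OF d]] unfolding x by cases simp_all
  qed
qed

lemma vert_of_eq_cramer3:
  "d \<in> D \<Longrightarrow> vert_of D tv fc n g (tv d) =
    cramer3 (n (fc d)) (n (fc (rot d))) (n (fc (rot (rot d))))
      (g (fc d)) (g (fc (rot d))) (g (fc (rot (rot d))))"
  unfolding vert_of_def by (rule the_equality) (use vertex_planes_iff in auto)

lemma vert_of_inner:
  "d \<in> D \<Longrightarrow> d' \<in> D \<Longrightarrow> tv d' = tv d \<Longrightarrow> vert_of D tv fc n g (tv d) \<bullet> n (fc d') = g (fc d')"
  using vertex_planes_iff vert_of_eq_cramer3 by blast

lemma vert_of_unique:
  "d \<in> D \<Longrightarrow> \<forall>d'\<in>D. tv d' = tv d \<longrightarrow> x \<bullet> n (fc d') = g (fc d') \<Longrightarrow> vert_of D tv fc n g (tv d) = x"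
  using vertex_planes_iff vert_of_eq_cramer3 by simp

lemma vert_of_has_vector_derivative:
  assumes "d \<in> D" and "\<forall>\<phi>\<in>fc ` D. ((\<lambda>t. H t \<phi>) has_real_derivative H' \<phi>) (at x)"
  shows "((\<lambda>t. vert_of D tv fc n (H t) (tv d)) has_vector_derivative vert_of D tv fc n H' (tv d)) (at x)"
  using assms rot_in unfolding vert_of_eq_cramer3[OF assms(1)]
  by (intro cramer3_has_vector_derivative) auto

end

locale polyhedral_surface = independent_normals D e nx tv fc n
  for D :: "'d set" and e nx :: "'d \<Rightarrow> 'd" and tv :: "'d \<Rightarrow> 'v" and fc :: "'d \<Rightarrow> 'f"
    and n :: "'f \<Rightarrow> real^3" +
  fixes f :: "'v \<Rightarrow> real^3" and h :: "'f \<Rightarrow> real"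
  assumes unit: "\<forall>d\<in>D. norm (n (fc d)) = 1"
    and planar: "\<forall>d\<in>D. f (tv d) \<bullet> n (fc d) = h (fc d)"
    and edge_nz: "\<forall>d\<in>D. edge_len e tv f d \<noteq> 0"
    and adj: "\<forall>d\<in>D. n (fc d) \<noteq> n (fc (e d)) \<and> n (fc d) \<noteq> - n (fc (e d))"
begin

lemma vert_of_heights:
  assumes "d \<in> D" "\<forall>\<phi>\<in>fc ` D. g \<phi> = h \<phi>"
  shows "vert_of D tv fc n g (tv d) = f (tv d)"
  using assms planar by (intro vert_of_unique) auto

definition edge_vec :: "'d \<Rightarrow> real^3" where
  "edge_vec d = f (tv (e d)) - f (tv d)"

definition normal_cross :: "'d \<Rightarrow> real^3" where
  "normal_cross d = n (fc d) \<times> n (fc (e d))"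

definition normal_inner :: "'d \<Rightarrow> real" where
  "normal_inner d = n (fc d) \<bullet> n (fc (e d))"

text \<open>The factor \<open>\<lambda>\<close> in \<open>f\<^sub>j - f\<^sub>i = \<lambda> n\<^sub>l \<times> n\<^sub>r\<close> (lemma \<open>edge_vec_eq\<close>); the hypothesis
\<open>n\<^sub>l \<noteq> \<plusminus>n\<^sub>r\<close> keeps the denominator nonzero.\<close>
definition edge_coeff :: "'d \<Rightarrow> real" where
  "edge_coeff d = (normal_cross d \<bullet> edge_vec d) / (normal_cross d \<bullet> normal_cross d)"

lemma normal_inner_self: "d \<in> D \<Longrightarrow> n (fc d) \<bullet> n (fc d) = 1"
  using unit by (metis power2_norm_eq_inner power_one)

lemma edge_vec_inner_normals:
  assumes "d \<in> D"
  shows "edge_vec d \<bullet> n (fc d) = 0" "edge_vec d \<bullet> n (fc (e d)) = 0"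
proof -
  have "f (tv (e d)) \<bullet> n (fc d) = h (fc d)" "f (tv d) \<bullet> n (fc (e d)) = h (fc (e d))"
    using planar nx_in[OF assms] rot_in[OF assms] by (auto simp: assms tv_nx fc_nx tv_rot fc_rot)
  then show "edge_vec d \<bullet> n (fc d) = 0" "edge_vec d \<bullet> n (fc (e d)) = 0"
    using planar assms e_in unfolding edge_vec_def by (simp_all add: inner_diff_left)
qed

lemma normal_inner_ne_pm1:
  assumes d: "d \<in> D"
  shows "1 + normal_inner d \<noteq> 0" "1 - normal_inner d \<noteq> 0"
proof -
  have unit_lr: "n (fc d) \<bullet> n (fc d) = 1" "n (fc (e d)) \<bullet> n (fc (e d)) = 1"
    using normal_inner_self d e_in by auto
  have "n (fc d) + n (fc (e d)) \<noteq> 0" "n (fc d) - n (fc (e d)) \<noteq> 0"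
    using adj d by (simp_all add: eq_neg_iff_add_eq_0)
  then have "(n (fc d) + n (fc (e d))) \<bullet> (n (fc d) + n (fc (e d))) \<noteq> 0"
    "(n (fc d) - n (fc (e d))) \<bullet> (n (fc d) - n (fc (e d))) \<noteq> 0"
    by simp_all
  then show "1 + normal_inner d \<noteq> 0" "1 - normal_inner d \<noteq> 0"
    using unit_lr unfolding normal_inner_def
    by (simp_all add: inner_add_left inner_add_right inner_diff_left inner_diff_right inner_commute)
qed

lemma normal_cross_inner_self:
  "d \<in> D \<Longrightarrow> normal_cross d \<bullet> normal_cross d = (1 - normal_inner d) * (1 + normal_inner d)"
proof -
  assume "d \<in> D"
  then have "normal_cross d \<bullet> normal_cross d = 1 - (normal_inner d)\<^sup>2"
    using norm_cross_dot[of "n (fc d)" "n (fc (e d))"] unit e_in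
    unfolding normal_cross_def normal_inner_def by (simp add: power2_norm_eq_inner)
  then show ?thesis by (simp add: power2_eq_square algebra_simps)
qed

lemma normal_cross_nonzero: "d \<in> D \<Longrightarrow> normal_cross d \<bullet> normal_cross d \<noteq> 0"
  using normal_cross_inner_self normal_inner_ne_pm1 by simp

lemma edge_vec_eq:
  assumes d: "d \<in> D"
  shows "edge_vec d = edge_coeff d *\<^sub>R normal_cross d"
proof -
  have "edge_vec d \<times> normal_cross d = 0"
    unfolding normal_cross_def cross_cross_eq using edge_vec_inner_normals[OF d] by simp
  then have "(normal_cross d \<bullet> normal_cross d) *\<^sub>R edge_vec d
      = (normal_cross d \<bullet> edge_vec d) *\<^sub>R normal_cross d"
    using cross_cross_eq[of "normal_cross d" "edge_vec d" "normal_cross d"] by simp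
  from arg_cong[OF this, of "scaleR (inverse (normal_cross d \<bullet> normal_cross d))"] show ?thesis
    using normal_cross_nonzero[OF d] unfolding edge_coeff_def by (simp add: divide_inverse_commute)
qed

lemma edge_coeff_e:
  assumes "d \<in> D"
  shows "edge_coeff (e d) = edge_coeff d"
proof -
  have "edge_vec (e d) = - edge_vec d" "normal_cross (e d) = - normal_cross d"
    unfolding edge_vec_def normal_cross_def using e_e[OF assms] cross_skew[of "n (fc (e d))"] by auto
  then show ?thesis unfolding edge_coeff_def by simp
qed

lemma edge_vec_cross_normal:
  assumes d: "d \<in> D"
  shows "edge_vec d \<times> n (fc d) = edge_coeff d *\<^sub>R (n (fc (e d)) - normal_inner d *\<^sub>R n (fc d))"
proof -
  have "normal_cross d \<times> n (fc d) = - (n (fc d) \<times> normal_cross d)"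
    by (rule cross_skew)
  also have "\<dots> = n (fc (e d)) - normal_inner d *\<^sub>R n (fc d)"
    using normal_inner_self[OF d] unfolding normal_cross_def cross_cross_eq normal_inner_def by simp
  finally have "normal_cross d \<times> n (fc d) = n (fc (e d)) - normal_inner d *\<^sub>R n (fc d)" .
  then show ?thesis by (simp add: edge_vec_eq[OF d] cross_mult_left)
qed

lemma edge_len_tan_half_dihedral:
  assumes d: "d \<in> D"
  shows "edge_len e tv f d * tan (dihedral e tv fc n f d / 2) = edge_coeff d * (1 - normal_inner d)"
proof -
  define l where "l = norm (edge_vec d)"
  define s where "s = normal_cross d \<bullet> (edge_vec d /\<^sub>R l)"
  define c where "c = normal_inner d"
  define w2 where "w2 = normal_cross d \<bullet> normal_cross d"
  have l_nz: "l \<noteq> 0" using edge_nz d unfolding l_def edge_len_def edge_vec_def by auto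
  have w2_nz: "w2 \<noteq> 0" unfolding w2_def using normal_cross_nonzero[OF d] .
  have l2: "l\<^sup>2 = (edge_coeff d)\<^sup>2 * w2"
    unfolding l_def w2_def power2_norm_eq_inner edge_vec_eq[OF d] by (simp add: power2_eq_square)
  have s_eq: "s = edge_coeff d * w2 / l"
    unfolding s_def w2_def edge_vec_eq[OF d] by (simp add: divide_inverse)
  have coeff_nz: "edge_coeff d \<noteq> 0" using l2 l_nz by auto
  have "s\<^sup>2 = (edge_coeff d)\<^sup>2 * w2\<^sup>2 / l\<^sup>2"
    unfolding s_eq by (simp add: power_divide power_mult_distrib)
  also have "\<dots> = w2" using coeff_nz w2_nz unfolding l2 by (simp add: power2_eq_square)
  finally have "s\<^sup>2 = w2" .
  then have "c\<^sup>2 + s\<^sup>2 = 1"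
    using normal_cross_inner_self[OF d] unfolding c_def w2_def by (simp add: algebra_simps power2_eq_square)
  moreover have "s \<noteq> 0" using coeff_nz l_nz w2_nz unfolding s_eq by simp
  ultimately have unique: "\<exists>!a. - pi < a \<and> a < pi \<and> cos a = c \<and> sin a = s"
    by (rule cos_sin_unique_angle)
  have "dihedral e tv fc n f d = (THE a. - pi < a \<and> a < pi \<and> cos a = c \<and> sin a = s)"
    unfolding dihedral_def s_def c_def normal_inner_def normal_cross_def edge_vec_def l_def ..
  then have "cos (dihedral e tv fc n f d) = c \<and> sin (dihedral e tv fc n f d) = s"
    using theI'[OF unique] by simp
  then have "tan (dihedral e tv fc n f d / 2) = s / (1 + c)"
    using tan_half[of "dihedral e tv fc n f d / 2"] by (simp add: add.commute)
  moreover have "edge_len e tv f d = l" unfolding l_def edge_len_def edge_vec_def ..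
  ultimately have "edge_len e tv f d * tan (dihedral e tv fc n f d / 2) = edge_coeff d * w2 / (1 + c)"
    using l_nz unfolding s_eq by simp
  also have "\<dots> = edge_coeff d * (1 - c)"
    using normal_inner_ne_pm1(1)[OF d] unfolding w2_def normal_cross_inner_self[OF d] c_def by simp
  finally show ?thesis unfolding c_def .
qed

lemma mean_curv_eq:
  "mean_curv D e tv fc n f \<phi> = 1/2 * (\<Sum>d\<in>face_darts \<phi>. edge_coeff d * (1 - normal_inner d))"
  unfolding mean_curv_def by (rule arg_cong, rule sum.cong) (simp_all add: edge_len_tan_half_dihedral)

lemma edge_area_variation:
  assumes d: "d \<in> D"
  shows "1/2 * ((vert_of D tv fc n g (tv d) + vert_of D tv fc n g (tv (e d))) \<bullet> edge_vec d \<times> n (fc d))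
    = edge_coeff d * (g (fc (e d)) - normal_inner d * g (fc d))"
proof -
  define A where "A = vert_of D tv fc n g (tv d)"
  define B where "B = vert_of D tv fc n g (tv (e d))"
  have "A \<bullet> n (fc d) = g (fc d)" "A \<bullet> n (fc (e d)) = g (fc (e d))"
    unfolding A_def using vert_of_inner[OF d d] vert_of_inner[OF d rot_in[OF d] tv_rot[OF d]] fc_rot[OF d]
    by simp_all
  moreover have "B \<bullet> n (fc (e d)) = g (fc (e d))" "B \<bullet> n (fc d) = g (fc d)"
    unfolding B_def using vert_of_inner[OF e_in[OF d] e_in[OF d]]
      vert_of_inner[OF e_in[OF d] nx_in[OF d] tv_nx[OF d]] fc_nx[OF d]
    by simp_all
  ultimately show ?thesis
    unfolding A_def[symmetric] B_def[symmetric] edge_vec_cross_normal[OF d]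
    by (simp add: inner_add_left inner_diff_right algebra_simps)
qed

lemma face_area_variation_eq:
  "1/2 * (\<Sum>d\<in>face_darts \<phi>. (f (tv d) \<times> vert_of D tv fc n g (tv (e d))
      + vert_of D tv fc n g (tv d) \<times> f (tv (e d))) \<bullet> n \<phi>)
    = (\<Sum>d\<in>face_darts \<phi>. edge_coeff d * (g (fc (e d)) - normal_inner d * g (fc d)))"
proof -
  let ?V = "vert_of D tv fc n g"
  define K where "K i = ?V i \<bullet> f i \<times> n \<phi>" for i
  have telescoping: "(f (tv d) \<times> ?V (tv (e d)) + ?V (tv d) \<times> f (tv (e d))) \<bullet> n \<phi>
      = (?V (tv d) + ?V (tv (e d))) \<bullet> edge_vec d \<times> n (fc d) - (K (tv (e d)) - K (tv d))"
    if "d \<in> face_darts \<phi>" for d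
    using that cross_add_inner_telescoping unfolding K_def edge_vec_def by simp
  have "(\<Sum>d\<in>face_darts \<phi>. (f (tv d) \<times> ?V (tv (e d)) + ?V (tv d) \<times> f (tv (e d))) \<bullet> n \<phi>)
      = (\<Sum>d\<in>face_darts \<phi>. (?V (tv d) + ?V (tv (e d))) \<bullet> edge_vec d \<times> n (fc d) - (K (tv (e d)) - K (tv d)))"
    using telescoping by (rule sum.cong[OF refl])
  also have "\<dots> = (\<Sum>d\<in>face_darts \<phi>. (?V (tv d) + ?V (tv (e d))) \<bullet> edge_vec d \<times> n (fc d))"
    by (simp only: sum_subtractf sum_face_darts_head_eq_tail diff_self diff_zero)
  finally have "1/2 * (\<Sum>d\<in>face_darts \<phi>. (f (tv d) \<times> ?V (tv (e d)) + ?V (tv d) \<times> f (tv (e d))) \<bullet> n \<phi>)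
      = 1/2 * (\<Sum>d\<in>face_darts \<phi>. (?V (tv d) + ?V (tv (e d))) \<bullet> edge_vec d \<times> n (fc d))"
    by (rule arg_cong)
  also have "\<dots> = (\<Sum>d\<in>face_darts \<phi>. 1/2 * ((?V (tv d) + ?V (tv (e d))) \<bullet> edge_vec d \<times> n (fc d)))"
    by (rule sum_distrib_left)
  also have "\<dots> = (\<Sum>d\<in>face_darts \<phi>. edge_coeff d * (g (fc (e d)) - normal_inner d * g (fc d)))"
    by (rule sum.cong[OF refl], rule edge_area_variation) simp
  finally show ?thesis .
qed

lemma face_area_has_derivative:
  assumes "\<forall>\<phi>\<in>fc ` D. H 0 \<phi> = h \<phi>"
    and "\<forall>\<phi>\<in>fc ` D. ((\<lambda>t. H t \<phi>) has_real_derivative H' \<phi>) (at 0)"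
  shows "((\<lambda>t. face_area D e tv fc n (vert_of D tv fc n (H t)) \<phi>) has_real_derivative
    (\<Sum>d\<in>face_darts \<phi>. edge_coeff d * (H' (fc (e d)) - normal_inner d * H' (fc d)))) (at 0)"
proof -
  let ?P = "\<lambda>t. vert_of D tv fc n (H t)"
  let ?V = "vert_of D tv fc n H'"
  have "((\<lambda>t. ?P t (tv d) \<times> ?P t (tv (e d)) \<bullet> n \<phi>) has_real_derivative
      (f (tv d) \<times> ?V (tv (e d)) + ?V (tv d) \<times> f (tv (e d))) \<bullet> n \<phi>) (at 0)"
    if d: "d \<in> face_darts \<phi>" for d
  proof -
    have "d \<in> D" "e d \<in> D" using d e_in by auto
    then have "((\<lambda>t. ?P t (tv d) \<times> ?P t (tv (e d))) has_vector_derivative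
        ?P 0 (tv d) \<times> ?V (tv (e d)) + ?V (tv d) \<times> ?P 0 (tv (e d))) (at 0)"
      using assms(2) bilinear_cross[unfolded bilinear_conv_bounded_bilinear]
      by (intro bounded_bilinear.has_vector_derivative vert_of_has_vector_derivative)
    moreover have "?P 0 (tv d) = f (tv d)" "?P 0 (tv (e d)) = f (tv (e d))"
      using vert_of_heights \<open>d \<in> D\<close> \<open>e d \<in> D\<close> assms(1) by auto
    ultimately show ?thesis
      unfolding has_real_derivative_iff_has_vector_derivative
      by (intro bounded_linear.has_vector_derivative[OF bounded_linear_inner_left]) simp
  qed
  then have "((\<lambda>t. 1/2 * (\<Sum>d\<in>face_darts \<phi>. ?P t (tv d) \<times> ?P t (tv (e d)) \<bullet> n \<phi>)) has_real_derivative
      1/2 * (\<Sum>d\<in>face_darts \<phi>. (f (tv d) \<times> ?V (tv (e d)) + ?V (tv d) \<times> f (tv (e d))) \<bullet> n \<phi>)) (at 0)"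
    by (intro DERIV_cmult DERIV_sum)
  then show ?thesis
    unfolding face_area_def face_area_variation_eq .
qed

lemma sum_edge_terms_symmetric:
  assumes "S \<subseteq> D" "\<forall>d\<in>S. e d \<in> S"
  shows "(\<Sum>d\<in>S. edge_coeff d * (g (fc (e d)) - normal_inner d * g (fc d)))
    = (\<Sum>d\<in>S. edge_coeff d * (1 - normal_inner d) * g (fc d))"
proof -
  have S_e: "e ` S = S" using assms e_e by (force simp: image_iff)
  have "inj_on e S" using assms e_e by (metis inj_on_inverseI subsetD)
  then have "(\<Sum>d\<in>S. edge_coeff d * g (fc (e d))) = (\<Sum>d\<in>e ` S. edge_coeff d * g (fc d))"
    using assms by (simp add: sum.reindex edge_coeff_e subset_iff)
  then have "(\<Sum>d\<in>S. edge_coeff d * g (fc (e d))) = (\<Sum>d\<in>S. edge_coeff d * g (fc d))"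
    unfolding S_e .
  then show ?thesis
    by (simp add: algebra_simps sum_subtractf)
qed

definition admissible_variation :: "(real \<Rightarrow> 'f \<Rightarrow> real) \<Rightarrow> bool" where
  "admissible_variation H \<longleftrightarrow> (\<forall>\<phi>\<in>fc ` D. H 0 \<phi> = h \<phi> \<and> smooth_fun (\<lambda>t. H t \<phi>)) \<and>
     finite {\<phi>\<in>fc ` D. deriv (\<lambda>t. H t \<phi>) 0 \<noteq> 0}"

definition area_variation :: "(real \<Rightarrow> 'f \<Rightarrow> real) \<Rightarrow> 'f \<Rightarrow> real" where
  "area_variation H = (\<lambda>\<phi>. deriv (\<lambda>t. face_area D e tv fc n (vert_of D tv fc n (H t)) \<phi>) 0)"

definition area_critical :: bool where
  "area_critical \<longleftrightarrow> (\<forall>H. admissible_variation H \<longrightarrow>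
     (let dA = area_variation H in finite {\<phi>\<in>fc ` D. dA \<phi> \<noteq> 0} \<and> (\<Sum>\<phi>\<in>{\<phi>\<in>fc ` D. dA \<phi> \<noteq> 0}. dA \<phi>) = 0))"

lemma first_variation_of_area:
  assumes "admissible_variation H"
  defines "dA \<equiv> area_variation H"
  shows "finite {\<phi>\<in>fc ` D. dA \<phi> \<noteq> 0} \<and>
    (\<Sum>\<phi>\<in>{\<phi>\<in>fc ` D. dA \<phi> \<noteq> 0}. dA \<phi>) =
      (\<Sum>\<phi>\<in>{\<phi>\<in>fc ` D. deriv (\<lambda>t. H t \<phi>) 0 \<noteq> 0}. deriv (\<lambda>t. H t \<phi>) 0 * (2 * mean_curv D e tv fc n f \<phi>))"
proof -
  define H' where "H' \<phi> = deriv (\<lambda>t. H t \<phi>) 0" for \<phi>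
  define G where "G d = edge_coeff d * (H' (fc (e d)) - normal_inner d * H' (fc d))" for d
  define Psi where "Psi = {\<phi>\<in>fc ` D. H' \<phi> \<noteq> 0}"
  define S where "S = {d\<in>D. fc d \<in> Psi \<or> fc (e d) \<in> Psi}"
  have "dA \<phi> = (\<Sum>d\<in>face_darts \<phi>. G d)" for \<phi>
    unfolding dA_def area_variation_def G_def H'_def
    using assms(1) smooth_fun_has_real_derivative unfolding admissible_variation_def
    by (intro DERIV_imp_deriv face_area_has_derivative) auto
  then have dA_eq: "dA = (\<lambda>\<phi>. \<Sum>d\<in>face_darts \<phi>. G d)" by auto
  have "finite Psi" using assms(1) unfolding admissible_variation_def Psi_def H'_def by simp
  then have finite_darts: "finite (\<Union>\<psi>\<in>Psi. face_darts \<psi>)" using finite_face_darts by blast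
  have "S \<subseteq> (\<Union>\<psi>\<in>Psi. face_darts \<psi>) \<union> e ` (\<Union>\<psi>\<in>Psi. face_darts \<psi>)"
    unfolding S_def using e_in e_e by (force simp: image_iff)
  then have finite_S: "finite S" using finite_darts finite_subset by blast
  have S_D: "S \<subseteq> D" and S_e: "\<forall>d\<in>S. e d \<in> S" unfolding S_def using e_in e_e by auto
  have "\<forall>d\<in>D - S. G d = 0" unfolding S_def Psi_def G_def using e_in by auto
  then have "finite {\<phi>\<in>fc ` D. dA \<phi> \<noteq> 0} \<and> (\<Sum>\<phi>\<in>{\<phi>\<in>fc ` D. dA \<phi> \<noteq> 0}. dA \<phi>) = sum G S"
    unfolding dA_eq using nonzero_fibre_sums[OF finite_S S_D] finite_face_darts by blast
  moreover have "sum G S = (\<Sum>d\<in>S. edge_coeff d * (1 - normal_inner d) * H' (fc d))"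
    unfolding G_def using S_D S_e by (rule sum_edge_terms_symmetric)
  also have "\<dots> = (\<Sum>\<psi>\<in>Psi. \<Sum>d\<in>face_darts \<psi>. edge_coeff d * (1 - normal_inner d) * H' (fc d))"
    using finite_S S_D \<open>finite Psi\<close> finite_face_darts unfolding S_def Psi_def
    by (intro sum_fibre_sums[symmetric]) auto
  also have "\<dots> = (\<Sum>\<psi>\<in>Psi. H' \<psi> * (2 * mean_curv D e tv fc n f \<psi>))"
    unfolding mean_curv_eq by (simp add: sum_distrib_left sum_distrib_right mult.commute)
  ultimately show ?thesis unfolding Psi_def H'_def by simp
qed

lemma minimal_iff_area_critical:
  "(\<forall>\<phi>\<in>fc ` D. mean_curv D e tv fc n f \<phi> = 0) \<longleftrightarrow> area_critical"
proof
  assume "\<forall>\<phi>\<in>fc ` D. mean_curv D e tv fc n f \<phi> = 0"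
  then show area_critical
    unfolding area_critical_def Let_def using first_variation_of_area by (auto intro!: sum.neutral)
next
  assume critical: area_critical
  show "\<forall>\<phi>\<in>fc ` D. mean_curv D e tv fc n f \<phi> = 0"
  proof
    fix \<psi> assume "\<psi> \<in> fc ` D"
    define H where "H t \<phi> = h \<phi> + (if \<phi> = \<psi> then 1 else 0) * t" for t \<phi>
    have H': "deriv (\<lambda>t. H t \<phi>) 0 = (if \<phi> = \<psi> then 1 else 0)" for \<phi>
      unfolding H_def by (intro DERIV_imp_deriv derivative_eq_intros) auto
    then have support: "{\<phi>\<in>fc ` D. deriv (\<lambda>t. H t \<phi>) 0 \<noteq> 0} = {\<psi>}"
      using \<open>\<psi> \<in> fc ` D\<close> by auto
    have "admissible_variation H"
      unfolding admissible_variation_def support by (simp add: H_def smooth_fun_affine)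
    then show "mean_curv D e tv fc n f \<psi> = 0"
      using critical first_variation_of_area[of H] support H' unfolding area_critical_def Let_def by simp
  qed
qed

end

theorem mainTheorem3:
  fixes D :: "'d set" and e nx :: "'d \<Rightarrow> 'd" and tv :: "'d \<Rightarrow> 'v" and fc :: "'d \<Rightarrow> 'f"
    and f :: "'v \<Rightarrow> real^3" and n :: "'f \<Rightarrow> real^3" and h :: "'f \<Rightarrow> real"
  assumes map: "comb_map D e nx tv fc"
    and triv: "trivalent D e nx"
    and unit: "\<forall>d\<in>D. norm (n (fc d)) = 1"
    and planar: "\<forall>d\<in>D. f (tv d) \<bullet> n (fc d) = h (fc d)"
    and edge_nz: "\<forall>d\<in>D. edge_len e tv f d \<noteq> 0"
    and indep: "\<forall>d\<in>D. lin_indep3 (n (fc d)) (n (fc ((nx \<circ> e) d))) (n (fc (((nx \<circ> e) ^^ 2) d)))"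
    and adj: "\<forall>d\<in>D. n (fc d) \<noteq> n (fc (e d)) \<and> n (fc d) \<noteq> - n (fc (e d))"
  shows "(\<forall>\<phi>\<in>fc ` D. mean_curv D e tv fc n f \<phi> = 0) \<longleftrightarrow>
    (\<forall>H :: real \<Rightarrow> 'f \<Rightarrow> real.
       (\<forall>\<phi>\<in>fc ` D. H 0 \<phi> = h \<phi> \<and> smooth_fun (\<lambda>t. H t \<phi>)) \<and>
       finite {\<phi>\<in>fc ` D. deriv (\<lambda>t. H t \<phi>) 0 \<noteq> 0} \<longrightarrow>
       (let dA = (\<lambda>\<phi>. deriv (\<lambda>t. face_area D e tv fc n (vert_of D tv fc n (H t)) \<phi>) 0)
        in finite {\<phi>\<in>fc ` D. dA \<phi> \<noteq> 0} \<and> (\<Sum>\<phi>\<in>{\<phi>\<in>fc ` D. dA \<phi> \<noteq> 0}. dA \<phi>) = 0))"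
proof -
  interpret polyhedral_surface D e nx tv fc n f h
    by unfold_locales (fact map triv indep unit planar edge_nz adj)+
  show ?thesis
    using minimal_iff_area_critical
    unfolding area_critical_def admissible_variation_def area_variation_def .
qed

end
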